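(* Let $\zeta:\mathbb{R}\to\mathbb{R}$ be continuous and assume either (i) $\zeta$ is not a polynomial, or (ii) $\zeta$ is not affine and there exists $t\in\mathbb{R}$ at which $\zeta$ is continuously differentiable with $\zeta'(t)\neq 0$. Let $N, D$ be positive integers and fix $0<\varsigma<1/(9D^{3/2})$. Let $\mathcal{G}$ be the complete graph on $N$ nodes, let $\tilde{\mathbf{A}} = \big(\mathbb{1}_{i\sim j \vee i=j}/\sqrt{\deg(v_i)\deg(v_j)}\big)_{i,j=1}^N$, let $\mathbf{W}$ be a $D\times D$ random matrix with i.i.d. entries $W_{i,j}\sim N(0,\varsigma^2)$, and let $\mathcal{L}^{\mathrm{conv+r}}_{\mathcal{G},\mathbf{W}}(\mathbf{X}) = \tilde{\mathbf{A}}\mathbf{X}\mathbf{W} + \mathbf{X}$. Then, with probability at least $1-e^{-D/2}$, the class of maps $\hat f:\mathbb{R}^{N\times D}\to\mathbb{R}$ of the form $\hat f = \mathrm{MLP}\circ\mathcal{L}^{\mathrm{conv+r}}_{\mathcal{G},\mathbf{W}}$, where $\mathrm{MLP}:\mathbb{R}^{N\times D}\to\mathbb{R}$ ranges over multilayer perceptrons with activation function $\zeta$, is dense in $\mathcal{C}(\mathbb{R}^{N\times D},\mathbb{R})$ for the topology of uniform convergence on compact sets.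
   Context: $i\sim j$ means $v_i$ and $v_j$ are adjacent; degrees count the self-loop, so that for the complete graph every entry of $\tilde{\mathbf{A}}$ equals $1/N$. MLPs take the matrix input (viewed as a vector in $\mathbb{R}^{ND}$) to a real number. *)

theory Defs
  imports "HOL-Probability.Probability" "HOL-Computational_Algebra.Polynomial"
begin

definition gdeg :: "('n::finite \<Rightarrow> 'n \<Rightarrow> bool) \<Rightarrow> 'n \<Rightarrow> real" where
  "gdeg E v = real (card {u. E v u \<or> u = v})"

definition norm_adj :: "('n::finite \<Rightarrow> 'n \<Rightarrow> bool) \<Rightarrow> real^'n^'n" where
  "norm_adj E = (\<chi> i j. (if E i j \<or> i = j then 1 else 0) / sqrt (gdeg E i * gdeg E j))"

definition complete_graph :: "'n \<Rightarrow> 'n \<Rightarrow> bool" where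
  "complete_graph i j \<longleftrightarrow> i \<noteq> j"

definition conv_res :: "real^'n^'n \<Rightarrow> real^'d^'d \<Rightarrow> real^'d^'n \<Rightarrow> real^'d^'n" where
  "conv_res A W X = A ** X ** W + X"

text \<open>Hidden-layer feature maps of an MLP with activation \<zeta> on input space 'a
(at least one hidden layer; each neuron given by (weights, bias)).\<close>
inductive_set mlp_feat :: "(real \<Rightarrow> real) \<Rightarrow> ('a::real_inner \<Rightarrow> real list) set"
  for \<zeta> :: "real \<Rightarrow> real" where
  first: "(\<lambda>x. map (\<lambda>(a, b). \<zeta> (inner a x + b)) ps) \<in> mlp_feat \<zeta>"
| deeper: "g \<in> mlp_feat \<zeta> \<Longrightarrow> (\<forall>(w, b) \<in> set ps. \<forall>x. length w = length (g x)) \<Longrightarrow>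
     (\<lambda>x. map (\<lambda>(w, b). \<zeta> (sum_list (map2 (*) w (g x)) + b)) ps) \<in> mlp_feat \<zeta>"

definition mlp :: "(real \<Rightarrow> real) \<Rightarrow> ('a::real_inner \<Rightarrow> real) set" where
  "mlp \<zeta> = {(\<lambda>x. sum_list (map2 (*) c (g x)) + d) | g c d.
             g \<in> mlp_feat \<zeta> \<and> (\<forall>x. length c = length (g x))}"

definition dense_ucc :: "('a::real_normed_vector \<Rightarrow> real) set \<Rightarrow> bool" where
  "dense_ucc F \<longleftrightarrow> (\<forall>f. continuous_on UNIV f \<longrightarrow> (\<forall>K. compact K \<longrightarrow> (\<forall>\<epsilon>>0.
      \<exists>h\<in>F. \<forall>x\<in>K. \<bar>f x - h x\<bar> < \<epsilon>)))"

text \<open>Law of a D\<times>D matrix with i.i.d. N(0, \<sigma>^2) entries, as a product measure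
over index pairs.\<close>
definition gauss_matrix_measure :: "real \<Rightarrow> (('d::finite \<times> 'd) \<Rightarrow> real) measure" where
  "gauss_matrix_measure \<sigma> = PiM UNIV (\<lambda>_. density lborel (normal_density 0 \<sigma>))"

definition mat_of :: "(('d::finite \<times> 'd) \<Rightarrow> real) \<Rightarrow> real^'d^'d" where
  "mat_of w = (\<chi> i j. w (i, j))"

definition cont_diff_at :: "(real \<Rightarrow> real) \<Rightarrow> real \<Rightarrow> bool" where
  "cont_diff_at f t \<longleftrightarrow> (\<exists>e>0. \<forall>x\<in>ball t e. f differentiable (at x)) \<and> isCont (deriv f) t"

end

(*
  For the complete graph every entry of the normalised adjacency matrix is 1/N, so once every entry
  of W is smaller than 1/D in modulus, X |-> A X W + X is injective: at an entry of maximal modulus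
  of a kernel element X, the entry of A X W has strictly smaller modulus. An injective linear map of
  R^(N x D) is a homeomorphism, and precomposition with it preserves density for the topology of
  uniform convergence on compact sets. It remains to see that MLPs with any continuous non-affine
  activation are dense once depth is unrestricted. Differentiating ridge functions zeta (l * y + b)
  in the weight l, after smoothing by moving averages, shows that y and y^2 are uniform limits of
  one-hidden-layer networks on compacts; composing with them, deep networks approximate sums and
  products of what they approximate, hence all polynomials, and Stone-Weierstrass concludes.
  Finally, by Markov's inequality for the 2D-th moment a Gaussian entry exceeds 1/D in modulus with
  probability at most (sigma^2 D^3)^D < 81^(-D), and Bernoulli's inequality over the D^2 entries
  bounds the probability of the good event below by 1 - D^2 81^(-D) >= 1 - exp (-D/2).
*)
theory Submission
  imports Defs
begin

section \<open>Uniform approximation on compact sets\<close>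

definition ucc_closure :: "('a::real_normed_vector \<Rightarrow> real) set \<Rightarrow> ('a \<Rightarrow> real) set" where
  "ucc_closure F = {f. \<forall>K. compact K \<longrightarrow> (\<forall>\<epsilon>>0. \<exists>h\<in>F. \<forall>x\<in>K. \<bar>f x - h x\<bar> < \<epsilon>)}"

lemma dense_ucc_iff_ucc_closure:
  "dense_ucc F \<longleftrightarrow> (\<forall>f. continuous_on UNIV f \<longrightarrow> f \<in> ucc_closure F)"
  by (auto simp: dense_ucc_def ucc_closure_def)

lemma ucc_closureI:
  assumes "\<And>K \<epsilon>. compact K \<Longrightarrow> 0 < \<epsilon> \<Longrightarrow> \<exists>h\<in>F. \<forall>x\<in>K. \<bar>f x - h x\<bar> < \<epsilon>"
  shows "f \<in> ucc_closure F"
  using assms by (auto simp: ucc_closure_def)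

lemma ucc_closureE:
  assumes "f \<in> ucc_closure F" "compact K" "0 < \<epsilon>"
  obtains h where "h \<in> F" "\<And>x. x \<in> K \<Longrightarrow> \<bar>f x - h x\<bar> < \<epsilon>"
proof -
  have "\<exists>h\<in>F. \<forall>x\<in>K. \<bar>f x - h x\<bar> < \<epsilon>"
    using assms unfolding ucc_closure_def by blast
  then show thesis using that by blast
qed

lemma subset_ucc_closure: "F \<subseteq> ucc_closure F"
proof (intro subsetI ucc_closureI)
  fix f K and \<epsilon> :: real
  assume "f \<in> F" "0 < \<epsilon>"
  then show "\<exists>h\<in>F. \<forall>x\<in>K. \<bar>f x - h x\<bar> < \<epsilon>" by (intro bexI[of _ f]) auto
qed

lemma ucc_closure_ucc_closure: "ucc_closure (ucc_closure F) = ucc_closure F"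
proof
  show "ucc_closure (ucc_closure F) \<subseteq> ucc_closure F"
  proof (intro subsetI ucc_closureI)
    fix f and K :: "'a set" and \<epsilon> :: real
    assume f: "f \<in> ucc_closure (ucc_closure F)" and K: "compact K" and \<epsilon>: "0 < \<epsilon>"
    obtain g where g: "g \<in> ucc_closure F" "\<And>x. x \<in> K \<Longrightarrow> \<bar>f x - g x\<bar> < \<epsilon> / 2"
      using ucc_closureE[OF f K] \<epsilon> by (metis half_gt_zero)
    obtain h where h: "h \<in> F" "\<And>x. x \<in> K \<Longrightarrow> \<bar>g x - h x\<bar> < \<epsilon> / 2"
      using ucc_closureE[OF g(1) K] \<epsilon> by (metis half_gt_zero)
    have "\<bar>f x - h x\<bar> < \<epsilon>" if "x \<in> K" for x
      using g(2)[OF that] h(2)[OF that] by linarith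
    then show "\<exists>h\<in>F. \<forall>x\<in>K. \<bar>f x - h x\<bar> < \<epsilon>"
      using h(1) by blast
  qed
qed (rule subset_ucc_closure)

lemma ucc_closure_add:
  assumes "\<And>f g. f \<in> F \<Longrightarrow> g \<in> F \<Longrightarrow> (\<lambda>x. f x + g x) \<in> F"
    and f: "f \<in> ucc_closure F" and g: "g \<in> ucc_closure F"
  shows "(\<lambda>x. f x + g x) \<in> ucc_closure F"
proof (rule ucc_closureI)
  fix K :: "'a set" and \<epsilon> :: real
  assume K: "compact K" and \<epsilon>: "0 < \<epsilon>"
  obtain f' where f': "f' \<in> F" "\<And>x. x \<in> K \<Longrightarrow> \<bar>f x - f' x\<bar> < \<epsilon> / 2"
    using ucc_closureE[OF f K] \<epsilon> by (metis half_gt_zero)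
  obtain g' where g': "g' \<in> F" "\<And>x. x \<in> K \<Longrightarrow> \<bar>g x - g' x\<bar> < \<epsilon> / 2"
    using ucc_closureE[OF g K] \<epsilon> by (metis half_gt_zero)
  have "\<bar>f x + g x - (f' x + g' x)\<bar> < \<epsilon>" if "x \<in> K" for x
    using f'(2)[OF that] g'(2)[OF that] by linarith
  then show "\<exists>h\<in>F. \<forall>x\<in>K. \<bar>f x + g x - h x\<bar> < \<epsilon>"
    using assms(1)[OF f'(1) g'(1)] by (intro bexI[of _ "\<lambda>x. f' x + g' x"]) auto
qed

lemma ucc_closure_mono: "F \<subseteq> G \<Longrightarrow> ucc_closure F \<subseteq> ucc_closure G"
  unfolding ucc_closure_def by blast

lemma ucc_closure_weighted_compose:
  fixes w :: "'a::real_normed_vector \<Rightarrow> real" and T :: "'a \<Rightarrow> 'b::real_normed_vector"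
  assumes w: "continuous_on UNIV w" and T: "continuous_on UNIV T" and f: "f \<in> ucc_closure F"
    and FG: "\<And>h. h \<in> F \<Longrightarrow> (\<lambda>x. w x * h (T x)) \<in> G"
  shows "(\<lambda>x. w x * f (T x)) \<in> ucc_closure G"
proof (rule ucc_closureI)
  fix K :: "'a set" and \<epsilon> :: real
  assume K: "compact K" and \<epsilon>: "0 < \<epsilon>"
  have "compact (w ` K)"
    using K w by (meson compact_continuous_image continuous_on_subset top_greatest)
  then obtain W where W: "\<And>x. x \<in> K \<Longrightarrow> \<bar>w x\<bar> \<le> W"
    by (metis bounded_real compact_imp_bounded imageI)
  have W1: "0 < \<bar>W\<bar> + 1"
    by simp
  have "compact (T ` K)"
    using K T by (meson compact_continuous_image continuous_on_subset top_greatest)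
  then obtain h where h: "h \<in> F" "\<And>y. y \<in> T ` K \<Longrightarrow> \<bar>f y - h y\<bar> < \<epsilon> / (\<bar>W\<bar> + 1)"
    using ucc_closureE[OF f] \<epsilon> W1 by (metis divide_pos_pos)
  have "\<bar>w x * f (T x) - w x * h (T x)\<bar> < \<epsilon>" if x: "x \<in> K" for x
  proof -
    have "\<bar>w x * f (T x) - w x * h (T x)\<bar> = \<bar>w x\<bar> * \<bar>f (T x) - h (T x)\<bar>"
      by (simp add: abs_mult flip: right_diff_distrib)
    also have "\<dots> \<le> (\<bar>W\<bar> + 1) * \<bar>f (T x) - h (T x)\<bar>"
      using W[OF x] by (intro mult_right_mono) auto
    also have "\<dots> < \<epsilon>"
      using h(2)[of "T x"] x W1 by (simp add: pos_less_divide_eq mult.commute)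
    finally show ?thesis .
  qed
  then show "\<exists>g\<in>G. \<forall>x\<in>K. \<bar>w x * f (T x) - g x\<bar> < \<epsilon>"
    using FG[OF h(1)] by (intro bexI[of _ "\<lambda>x. w x * h (T x)"]) auto
qed

lemma ucc_closure_compose_right:
  assumes "continuous_on UNIV T" "f \<in> ucc_closure F" "\<And>h. h \<in> F \<Longrightarrow> h \<circ> T \<in> G"
  shows "f \<circ> T \<in> ucc_closure G"
  using ucc_closure_weighted_compose[of "\<lambda>_. 1" T f F G] assms by (simp add: o_def continuous_on_const)

lemma ucc_closure_scale:
  assumes "\<And>f. f \<in> F \<Longrightarrow> (\<lambda>x. c * f x) \<in> F" and "f \<in> ucc_closure F"
  shows "(\<lambda>x. c * f x) \<in> ucc_closure F"
  using ucc_closure_weighted_compose[of "\<lambda>_. c" id f F F] assms by (simp add: continuous_on_const)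

lemma ucc_closure_compose_left:
  fixes \<psi> :: "real \<Rightarrow> real"
  assumes "continuous_on UNIV \<psi>" "continuous_on UNIV u" "u \<in> ucc_closure U"
    and "\<And>v. v \<in> U \<Longrightarrow> \<psi> \<circ> v \<in> ucc_closure G"
  shows "\<psi> \<circ> u \<in> ucc_closure G"
proof -
  have "\<psi> \<circ> u \<in> ucc_closure (ucc_closure G)"
  proof (rule ucc_closureI)
    fix K :: "'a set" and \<epsilon> :: real
    assume K: "compact K" and \<epsilon>: "0 < \<epsilon>"
    have "compact (u ` K)"
      using K assms(2) by (meson compact_continuous_image continuous_on_subset top_greatest)
    then obtain R where R: "\<And>x. x \<in> K \<Longrightarrow> \<bar>u x\<bar> \<le> R"
      by (metis bounded_real compact_imp_bounded imageI)
    have "uniformly_continuous_on {-R-1..R+1} \<psi>"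
      by (meson assms(1) compact_Icc compact_uniformly_continuous continuous_on_subset top_greatest)
    then obtain d where d: "d > 0"
      "\<And>x y. x \<in> {-R-1..R+1} \<Longrightarrow> y \<in> {-R-1..R+1} \<Longrightarrow> dist y x < d \<Longrightarrow> dist (\<psi> y) (\<psi> x) < \<epsilon>"
      using \<epsilon> unfolding uniformly_continuous_on_def by metis
    obtain v where v: "v \<in> U" "\<And>x. x \<in> K \<Longrightarrow> \<bar>u x - v x\<bar> < min d 1"
      using ucc_closureE[OF assms(3) K, of "min d 1"] d(1) by auto
    have "\<bar>\<psi> (u x) - \<psi> (v x)\<bar> < \<epsilon>" if "x \<in> K" for x
    proof -
      have "u x \<in> {-R-1..R+1}" "v x \<in> {-R-1..R+1}"
        using R[OF that] v(2)[OF that] by (auto simp: abs_le_iff abs_less_iff)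
      then show ?thesis
        using d(2)[of "v x" "u x"] v(2)[OF that] by (simp add: dist_real_def abs_minus_commute)
    qed
    then show "\<exists>h\<in>ucc_closure G. \<forall>x\<in>K. \<bar>(\<psi> \<circ> u) x - h x\<bar> < \<epsilon>"
      using assms(4)[OF v(1)] by (intro bexI[of _ "\<psi> \<circ> v"]) auto
  qed
  then show ?thesis by (simp add: ucc_closure_ucc_closure)
qed

section \<open>Networks of a given depth\<close>

primrec deep_net :: "(real \<Rightarrow> real) \<Rightarrow> nat \<Rightarrow> ('a::real_inner \<Rightarrow> real) set" where
  "deep_net \<zeta> 0 = {(\<lambda>x. inner a x + b) | a b. True}"
| "deep_net \<zeta> (Suc L) =
     {(\<lambda>x. (\<Sum>k\<in>K. c k * \<zeta> (k x)) + d) | K c d. finite K \<and> K \<subseteq> deep_net \<zeta> L}"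

lemma deep_net_0I: "(\<lambda>x. inner a x + b) \<in> deep_net \<zeta> 0"
  by auto

lemma deep_net_SucI:
  "finite K \<Longrightarrow> K \<subseteq> deep_net \<zeta> L \<Longrightarrow> (\<lambda>x. (\<Sum>k\<in>K. c k * \<zeta> (k x)) + d) \<in> deep_net \<zeta> (Suc L)"
  by auto

lemma deep_net_SucE:
  assumes "f \<in> deep_net \<zeta> (Suc L)"
  obtains K c d where "finite K" "K \<subseteq> deep_net \<zeta> L" "f = (\<lambda>x. (\<Sum>k\<in>K. c k * \<zeta> (k x)) + d)"
  using assms by auto

lemma deep_net_0E:
  assumes "f \<in> deep_net \<zeta> 0"
  obtains a b where "f = (\<lambda>x. inner a x + b)"
  using assms by auto

declare deep_net.simps [simp del]

lemma deep_net_neuron: "k \<in> deep_net \<zeta> L \<Longrightarrow> (\<lambda>x. \<zeta> (k x)) \<in> deep_net \<zeta> (Suc L)"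
  using deep_net_SucI[of "{k}" \<zeta> L "\<lambda>_. 1" 0] by simp

lemma deep_net_affine:
  assumes "f \<in> deep_net \<zeta> L"
  shows "(\<lambda>x. a * f x + b) \<in> deep_net \<zeta> L"
proof (cases L)
  case 0
  then obtain v c where "f = (\<lambda>x. inner v x + c)"
    using assms deep_net_0E by blast
  then show ?thesis
    using deep_net_0I[of "a *\<^sub>R v" "a * c + b" \<zeta>] 0 by (simp add: algebra_simps)
next
  case (Suc L')
  then obtain K c d where "finite K" "K \<subseteq> deep_net \<zeta> L'" "f = (\<lambda>x. (\<Sum>k\<in>K. c k * \<zeta> (k x)) + d)"
    using assms deep_net_SucE by blast
  then show ?thesis
    using deep_net_SucI[of K \<zeta> L' "\<lambda>k. a * c k" "a * d + b"] Suc
    by (simp add: sum_distrib_left algebra_simps)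
qed

lemma deep_net_add:
  assumes "f \<in> deep_net \<zeta> L" "g \<in> deep_net \<zeta> L"
  shows "(\<lambda>x. f x + g x) \<in> deep_net \<zeta> L"
proof (cases L)
  case 0
  then obtain a b a' b' where "f = (\<lambda>x. inner a x + b)" "g = (\<lambda>x. inner a' x + b')"
    using assms deep_net_0E by metis
  then show ?thesis
    using deep_net_0I[of "a + a'" "b + b'" \<zeta>] 0 by (simp add: inner_add_left algebra_simps)
next
  case (Suc L')
  obtain K c d where K: "finite K" "K \<subseteq> deep_net \<zeta> L'" "f = (\<lambda>x. (\<Sum>k\<in>K. c k * \<zeta> (k x)) + d)"
    using assms(1) Suc deep_net_SucE by blast
  obtain K' c' d' where K': "finite K'" "K' \<subseteq> deep_net \<zeta> L'" "g = (\<lambda>x. (\<Sum>k\<in>K'. c' k * \<zeta> (k x)) + d')"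
    using assms(2) Suc deep_net_SucE by blast
  define e where "e k = (if k \<in> K then c k else 0) + (if k \<in> K' then c' k else 0)" for k
  have "(\<Sum>k\<in>K \<union> K'. e k * \<zeta> (k x)) = (\<Sum>k\<in>K. c k * \<zeta> (k x)) + (\<Sum>k\<in>K'. c' k * \<zeta> (k x))"
    for x
  proof -
    have "(\<Sum>k\<in>K \<union> K'. e k * \<zeta> (k x))
        = (\<Sum>k\<in>K \<union> K'. if k \<in> K then c k * \<zeta> (k x) else 0)
          + (\<Sum>k\<in>K \<union> K'. if k \<in> K' then c' k * \<zeta> (k x) else 0)"
      unfolding sum.distrib[symmetric] by (rule sum.cong) (auto simp: e_def distrib_right)
    also have "\<dots> = (\<Sum>k\<in>K. c k * \<zeta> (k x)) + (\<Sum>k\<in>K'. c' k * \<zeta> (k x))"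
      using K(1) K'(1) by (simp add: sum.inter_restrict[symmetric] Un_Int_eq)
    finally show ?thesis .
  qed
  then show ?thesis
    using deep_net_SucI[of "K \<union> K'" \<zeta> L' e "d + d'"] K K' Suc by (simp add: algebra_simps)
qed

lemma deep_net_sum:
  "finite I \<Longrightarrow> (\<And>i. i \<in> I \<Longrightarrow> f i \<in> deep_net \<zeta> (Suc L)) \<Longrightarrow>
    (\<lambda>x. \<Sum>i\<in>I. f i x) \<in> deep_net \<zeta> (Suc L)"
proof (induction I rule: finite_induct)
  case empty
  then show ?case using deep_net_SucI[of "{}" \<zeta> L _ 0] by simp
next
  case (insert i I)
  then show ?case using deep_net_add[of "f i" \<zeta> "Suc L" "\<lambda>x. \<Sum>i\<in>I. f i x"] by simp
qed

lemma deep_net_compose: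
  fixes g :: "real \<Rightarrow> real"
  assumes "g \<in> deep_net \<zeta> (Suc 0)" "u \<in> deep_net \<zeta> L"
  shows "g \<circ> u \<in> deep_net \<zeta> (Suc L)"
proof -
  obtain K c d where K: "finite K" "K \<subseteq> deep_net \<zeta> 0" "g = (\<lambda>y. (\<Sum>k\<in>K. c k * \<zeta> (k y)) + d)"
    using assms(1) deep_net_SucE by blast
  have "(\<lambda>x. c k * \<zeta> (k (u x))) \<in> deep_net \<zeta> (Suc L)" if k: "k \<in> K" for k
  proof -
    obtain a b where "k = (\<lambda>y. inner a y + b)"
      using K(2) k deep_net_0E by blast
    then have "(\<lambda>x. k (u x)) \<in> deep_net \<zeta> L"
      using deep_net_affine[OF assms(2), of a b] by simp
    then show ?thesis
      using deep_net_affine[OF deep_net_neuron, of "\<lambda>x. k (u x)" \<zeta> L "c k" 0] by simp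
  qed
  then have "(\<lambda>x. \<Sum>k\<in>K. c k * \<zeta> (k (u x))) \<in> deep_net \<zeta> (Suc L)"
    by (rule deep_net_sum[OF K(1)])
  then show ?thesis
    using deep_net_affine[of _ \<zeta> "Suc L" 1 d] K(3) by (simp add: o_def)
qed

lemma deep_net_continuous:
  assumes "continuous_on UNIV \<zeta>"
  shows "f \<in> deep_net \<zeta> L \<Longrightarrow> continuous_on UNIV f"
proof (induction L arbitrary: f)
  case 0
  then obtain a b where "f = (\<lambda>x. inner a x + b)"
    by (rule deep_net_0E)
  then show ?case
    by (simp add: continuous_on_add continuous_on_inner continuous_on_const continuous_on_id)
next
  case (Suc L)
  obtain K c d where K: "finite K" "K \<subseteq> deep_net \<zeta> L" "f = (\<lambda>x. (\<Sum>k\<in>K. c k * \<zeta> (k x)) + d)"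
    using Suc.prems by (rule deep_net_SucE)
  have "continuous_on UNIV (\<lambda>x. \<zeta> (k x))" if "k \<in> K" for k
    using that K(2) by (intro continuous_on_compose2[OF assms Suc.IH]) auto
  then have "continuous_on UNIV (\<lambda>x. (\<Sum>k\<in>K. c k * \<zeta> (k x)) + d)"
    by (intro continuous_intros) auto
  then show ?case
    using K(3) by simp
qed

lemma sum_list_map2_times_map:
  fixes c F :: "'a \<Rightarrow> real"
  shows "distinct js \<Longrightarrow> sum_list (map2 (*) (map c js) (map F js)) = (\<Sum>j\<in>set js. c j * F j)"
  by (simp add: zip_map1 zip_map2 zip_same_conv_map o_def sum_list_distinct_conv_sum_set)

lemma neuron_sum_as_sum_list:
  fixes c F :: "'a \<Rightarrow> real"
  assumes "distinct js" "K \<subseteq> set js"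
  shows "sum_list (map2 (*) (map (\<lambda>j. if j \<in> K then c j else 0) js) (map F js)) = (\<Sum>j\<in>K. c j * F j)"
proof -
  have "sum_list (map2 (*) (map (\<lambda>j. if j \<in> K then c j else 0) js) (map F js))
      = (\<Sum>j\<in>set js. (if j \<in> K then c j else 0) * F j)"
    using assms(1) by (rule sum_list_map2_times_map)
  also have "\<dots> = (\<Sum>j\<in>set js. if j \<in> K then c j * F j else 0)"
    by (rule sum.cong) auto
  also have "\<dots> = (\<Sum>j\<in>K. c j * F j)"
    using assms(2) by (simp add: sum.inter_restrict[symmetric] Int_absorb1)
  finally show ?thesis .
qed

lemma deep_net_0_choice:
  assumes "set ks \<subseteq> deep_net \<zeta> 0"
  obtains a b where "\<And>k x. k \<in> set ks \<Longrightarrow> k x = inner (a k) x + b k"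
proof -
  have "\<forall>k\<in>set ks. \<exists>a b. \<forall>x. k x = inner a x + b"
  proof
    fix k
    assume "k \<in> set ks"
    then have "k \<in> deep_net \<zeta> 0"
      using assms by blast
    then obtain a b where "k = (\<lambda>x. inner a x + b)"
      by (rule deep_net_0E)
    then show "\<exists>a b. \<forall>x. k x = inner a x + b"
      by auto
  qed
  then show thesis
    using that unfolding bchoice_iff by blast
qed

lemma deep_net_Suc_choice:
  assumes "set ks \<subseteq> deep_net \<zeta> (Suc L)"
  obtains K c d where "\<And>k. k \<in> set ks \<Longrightarrow> finite (K k) \<and> K k \<subseteq> deep_net \<zeta> L"
    "\<And>k x. k \<in> set ks \<Longrightarrow> k x = (\<Sum>j\<in>K k. c k j * \<zeta> (j x)) + d k"
proof -
  have "\<forall>k\<in>set ks. \<exists>K c d. (finite K \<and> K \<subseteq> deep_net \<zeta> L) \<and> (\<forall>x. k x = (\<Sum>j\<in>K. c j * \<zeta> (j x)) + d)"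
  proof
    fix k
    assume "k \<in> set ks"
    then have "k \<in> deep_net \<zeta> (Suc L)"
      using assms by blast
    then obtain K c d where "finite K" "K \<subseteq> deep_net \<zeta> L" "k = (\<lambda>x. (\<Sum>j\<in>K. c j * \<zeta> (j x)) + d)"
      by (rule deep_net_SucE)
    then show "\<exists>K c d. (finite K \<and> K \<subseteq> deep_net \<zeta> L) \<and> (\<forall>x. k x = (\<Sum>j\<in>K. c j * \<zeta> (j x)) + d)"
      by auto
  qed
  then show thesis
    using that unfolding bchoice_iff by blast
qed

lemma mlp_feat_next_layer:
  assumes g0: "g0 \<in> mlp_feat \<zeta>" "\<And>x. g0 x = map (\<lambda>j. \<zeta> (j x)) js" "distinct js"
    and K: "\<And>k. k \<in> set ks \<Longrightarrow> K k \<subseteq> set js"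
    and k_eq: "\<And>k x. k \<in> set ks \<Longrightarrow> k x = (\<Sum>j\<in>K k. c k j * \<zeta> (j x)) + d k"
  shows "\<exists>g\<in>mlp_feat \<zeta>. \<forall>x. g x = map (\<lambda>k. \<zeta> (k x)) ks"
proof -
  define w where "w k = map (\<lambda>j. if j \<in> K k then c k j else 0) js" for k
  define g where "g x = map (\<lambda>(w, b). \<zeta> (sum_list (map2 (*) w (g0 x)) + b)) (map (\<lambda>k. (w k, d k)) ks)"
    for x
  have "length (w k) = length (g0 x)" for k x
    by (simp add: w_def g0(2))
  then have "g \<in> mlp_feat \<zeta>"
    unfolding g_def[abs_def] by (intro mlp_feat.deeper[OF g0(1)]) auto
  moreover have "sum_list (map2 (*) (w k) (g0 x)) + d k = k x" if "k \<in> set ks" for k x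
    using K[OF that] g0(3) by (simp add: w_def g0(2) k_eq[OF that] neuron_sum_as_sum_list)
  then have "g x = map (\<lambda>k. \<zeta> (k x)) ks" for x
    by (auto simp: g_def intro!: map_cong)
  ultimately show ?thesis
    by blast
qed

lemma mlp_feat_neurons:
  "set ks \<subseteq> deep_net \<zeta> L \<Longrightarrow> \<exists>g\<in>mlp_feat \<zeta>. \<forall>x. g x = map (\<lambda>k. \<zeta> (k x)) ks"
proof (induction L arbitrary: ks)
  case 0
  obtain a b where ab: "\<And>k x. k \<in> set ks \<Longrightarrow> k x = inner (a k) x + b k"
    using deep_net_0_choice[OF "0"] by blast
  define g where "g x = map (\<lambda>(a, b). \<zeta> (inner a x + b)) (map (\<lambda>k. (a k, b k)) ks)" for x
  have "g \<in> mlp_feat \<zeta>"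
    unfolding g_def[abs_def] by (rule mlp_feat.first)
  moreover have "g x = map (\<lambda>k. \<zeta> (k x)) ks" for x
    using ab by (auto simp: g_def intro!: map_cong)
  ultimately show ?case
    by blast
next
  case (Suc L)
  obtain K c d where K: "\<And>k. k \<in> set ks \<Longrightarrow> finite (K k) \<and> K k \<subseteq> deep_net \<zeta> L"
    and k_eq: "\<And>k x. k \<in> set ks \<Longrightarrow> k x = (\<Sum>j\<in>K k. c k j * \<zeta> (j x)) + d k"
    using deep_net_Suc_choice[OF Suc.prems] by blast
  have "finite (\<Union>k\<in>set ks. K k)"
    using K by blast
  then obtain js where js: "set js = (\<Union>k\<in>set ks. K k)" "distinct js"
    using finite_distinct_list by blast
  have "set js \<subseteq> deep_net \<zeta> L"
    using js(1) K by blast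
  then obtain g0 where g0: "g0 \<in> mlp_feat \<zeta>" "\<And>x. g0 x = map (\<lambda>j. \<zeta> (j x)) js"
    using Suc.IH by blast
  show ?case
  proof (rule mlp_feat_next_layer[where K = K and c = c and d = d, OF g0 js(2)])
    show "K k \<subseteq> set js" if "k \<in> set ks" for k
      using js(1) that by auto
    show "k x = (\<Sum>j\<in>K k. c k j * \<zeta> (j x)) + d k" if "k \<in> set ks" for k x
      using that by (rule k_eq)
  qed
qed

lemma deep_net_Suc_subset_mlp: "deep_net \<zeta> (Suc L) \<subseteq> mlp \<zeta>"
proof
  fix h :: "'a \<Rightarrow> real"
  assume "h \<in> deep_net \<zeta> (Suc L)"
  then obtain K c d where K: "finite K" "K \<subseteq> deep_net \<zeta> L" "h = (\<lambda>x. (\<Sum>k\<in>K. c k * \<zeta> (k x)) + d)"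
    by (rule deep_net_SucE)
  obtain ks where ks: "set ks = K" "distinct ks"
    using finite_distinct_list[OF K(1)] by blast
  obtain g where g: "g \<in> mlp_feat \<zeta>" "\<And>x. g x = map (\<lambda>k. \<zeta> (k x)) ks"
    using mlp_feat_neurons[of ks \<zeta> L] K(2) ks(1) by blast
  have "h = (\<lambda>x. sum_list (map2 (*) (map c ks) (g x)) + d)"
    using K(3) ks by (simp add: g(2) sum_list_map2_times_map)
  then show "h \<in> mlp \<zeta>"
    unfolding mlp_def mem_Collect_eq
    by (intro exI[of _ g] exI[of _ "map c ks"] exI[of _ d]) (simp add: g)
qed

section \<open>Moving averages\<close>

definition closed_shift_invariant_subspace :: "(real \<Rightarrow> real) set \<Rightarrow> bool" where
  "closed_shift_invariant_subspace C \<longleftrightarrow>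
     (\<forall>f\<in>C. \<forall>g\<in>C. (\<lambda>y. f y + g y) \<in> C) \<and> (\<forall>f\<in>C. \<forall>c. (\<lambda>y. c * f y) \<in> C) \<and>
     (\<forall>f\<in>C. \<forall>t. (\<lambda>y. f (y + t)) \<in> C) \<and> ucc_closure C \<subseteq> C"

lemma integral_Icc_close_to_const:
  fixes f :: "real \<Rightarrow> real"
  assumes "a \<le> b" "continuous_on {a..b} f" "\<And>x. x \<in> {a..b} \<Longrightarrow> \<bar>f x - c\<bar> \<le> e"
  shows "\<bar>integral {a..b} f - (b - a) * c\<bar> \<le> (b - a) * e"
proof -
  have e: "0 \<le> e"
    using assms(1) assms(3)[of a] by auto
  have "f integrable_on {a..b}"
    using assms(2) by (rule integrable_continuous_real)
  then have I: "((\<lambda>x. f x - c) has_integral integral {a..b} f - (b - a) * c) {a..b}"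
    using assms(1) has_integral_const_real[of c a b] by (intro has_integral_diff integrable_integral) auto
  have "norm (integral {a..b} f - (b - a) * c) \<le> e * Henstock_Kurzweil_Integration.content {a..b}"
    by (rule has_integral_bound_real[OF e finite.emptyI I]) (use assms(3) in auto)
  then show ?thesis
    using assms(1) by (simp add: mult.commute)
qed

lemma integral_Icc_split_equal:
  fixes f :: "real \<Rightarrow> real"
  assumes "0 \<le> s" "continuous_on UNIV f"
  shows "integral {a..a + real n * s} f = (\<Sum>i<n. integral {a + real i * s..a + real (Suc i) * s} f)"
proof (induction n)
  case (Suc n)
  have "integral {a..a + real n * s} f + integral {a + real n * s..a + real (Suc n) * s} f
      = integral {a..a + real (Suc n) * s} f"
    using assms
    by (intro Henstock_Kurzweil_Integration.integral_combine integrable_continuous_real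
        continuous_on_subset[OF assms(2)])
      (auto simp: algebra_simps)
  then show ?case
    using Suc by simp
qed simp

lemma riemann_sum_error:
  fixes \<phi> :: "real \<Rightarrow> real"
  assumes \<phi>: "continuous_on UNIV \<phi>" and s: "0 \<le> s"
    and osc: "\<And>x x'. x \<in> {a..a + real n * s} \<Longrightarrow> x' \<in> {a..a + real n * s} \<Longrightarrow> \<bar>x - x'\<bar> \<le> s \<Longrightarrow>
      \<bar>\<phi> x - \<phi> x'\<bar> \<le> e"
  shows "\<bar>integral {a..a + real n * s} \<phi> - (\<Sum>i<n. s * \<phi> (a + real i * s))\<bar> \<le> real n * (s * e)"
proof -
  let ?x = "\<lambda>i. a + real i * s"
  have piece: "\<bar>integral {?x i..?x (Suc i)} \<phi> - s * \<phi> (?x i)\<bar> \<le> s * e" if i: "i < n" for i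
  proof -
    have "real (Suc i) * s \<le> real n * s"
      using i s by (intro mult_right_mono) auto
    then have sub: "{?x i..?x (Suc i)} \<subseteq> {a..a + real n * s}"
      using s by auto
    have len: "?x (Suc i) - ?x i = s"
      by (simp add: algebra_simps)
    have "\<bar>\<phi> x - \<phi> (?x i)\<bar> \<le> e" if x: "x \<in> {?x i..?x (Suc i)}" for x
    proof (rule osc)
      have "?x i \<in> {?x i..?x (Suc i)}"
        using len s by simp
      then show "x \<in> {a..a + real n * s}" "?x i \<in> {a..a + real n * s}"
        using x sub by blast+
      show "\<bar>x - ?x i\<bar> \<le> s"
        using x len by auto
    qed
    then show ?thesis
      using integral_Icc_close_to_const[of "?x i" "?x (Suc i)" \<phi> "\<phi> (?x i)" e] len s
        continuous_on_subset[OF \<phi>] by simp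
  qed
  have "\<bar>integral {a..a + real n * s} \<phi> - (\<Sum>i<n. s * \<phi> (?x i))\<bar>
      = \<bar>\<Sum>i<n. integral {?x i..?x (Suc i)} \<phi> - s * \<phi> (?x i)\<bar>"
    using integral_Icc_split_equal[OF s \<phi>, of a n] by (simp add: sum_subtractf)
  also have "\<dots> \<le> (\<Sum>i<n. s * e)"
    by (rule order_trans[OF sum_abs sum_mono]) (use piece in auto)
  finally show ?thesis
    by simp
qed

lemma moving_average_riemann_sums:
  fixes \<phi> :: "real \<Rightarrow> real"
  assumes \<phi>: "continuous_on UNIV \<phi>" and K: "compact K" and h: "0 < h" and \<epsilon>: "0 < \<epsilon>"
  obtains n where "0 < n"
    "\<And>y. y \<in> K \<Longrightarrow> \<bar>integral {y..y+h} \<phi> / h - (\<Sum>i<n. \<phi> (y + real i * (h / real n))) / real n\<bar> < \<epsilon>"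
proof -
  obtain R where R: "\<And>y. y \<in> K \<Longrightarrow> \<bar>y\<bar> \<le> R"
    using K by (metis bounded_real compact_imp_bounded)
  have "uniformly_continuous_on {-R..R+h} \<phi>"
    by (meson \<phi> compact_Icc compact_uniformly_continuous continuous_on_subset top_greatest)
  then obtain d where d: "0 < d"
    "\<And>x x'. x \<in> {-R..R+h} \<Longrightarrow> x' \<in> {-R..R+h} \<Longrightarrow> dist x' x < d \<Longrightarrow> dist (\<phi> x') (\<phi> x) < \<epsilon> / 2"
    using \<epsilon> unfolding uniformly_continuous_on_def by (metis half_gt_zero)
  obtain n :: nat where n: "h / d < real n"
    using reals_Archimedean2 by blast
  then have n0: "0 < n"
    using h d by (metis divide_pos_pos of_nat_0_less_iff order.strict_trans)
  define s where "s = h / real n"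
  have s: "0 < s" "s < d" "h = real n * s"
    using n n0 h d by (auto simp: s_def field_simps)
  have "\<bar>integral {y..y+h} \<phi> / h - (\<Sum>i<n. \<phi> (y + real i * s)) / real n\<bar> < \<epsilon>" if y: "y \<in> K" for y
  proof -
    have "{y..y + real n * s} \<subseteq> {-R..R+h}"
      using R[OF y] s(3) by (auto simp: abs_le_iff)
    then have "\<bar>integral {y..y + real n * s} \<phi> - (\<Sum>i<n. s * \<phi> (y + real i * s))\<bar> \<le> real n * (s * (\<epsilon> / 2))"
      using d(2) s(1,2) by (intro riemann_sum_error[OF \<phi>]) (auto simp: dist_real_def subset_iff less_imp_le)
    then have "\<bar>integral {y..y+h} \<phi> - (\<Sum>i<n. \<phi> (y + real i * s)) * (h / real n)\<bar> \<le> h * (\<epsilon> / 2)"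
      using s(3) by (simp add: sum_distrib_left[symmetric] mult_ac)
    moreover have "integral {y..y+h} \<phi> / h - (\<Sum>i<n. \<phi> (y + real i * s)) / real n
        = (integral {y..y+h} \<phi> - (\<Sum>i<n. \<phi> (y + real i * s)) * (h / real n)) / h"
      using h n0 by (simp add: diff_divide_distrib)
    ultimately have "\<bar>integral {y..y+h} \<phi> / h - (\<Sum>i<n. \<phi> (y + real i * s)) / real n\<bar> \<le> \<epsilon> / 2"
      using h by (simp add: abs_divide divide_le_eq mult.commute)
    then show ?thesis
      using \<epsilon> by linarith
  qed
  then show ?thesis
    using that n0 by (simp add: s_def)
qed

lemma moving_average_mem:
  assumes C: "closed_shift_invariant_subspace C" and \<phi>: "\<phi> \<in> C" "continuous_on UNIV \<phi>" and h: "0 < h"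
  shows "(\<lambda>y. integral {y..y+h} \<phi> / h) \<in> C"
proof -
  have add: "\<And>f g. f \<in> C \<Longrightarrow> g \<in> C \<Longrightarrow> (\<lambda>y. f y + g y) \<in> C"
    and scale: "\<And>f c. f \<in> C \<Longrightarrow> (\<lambda>y. c * f y) \<in> C"
    and shift: "\<And>f t. f \<in> C \<Longrightarrow> (\<lambda>y. f (y + t)) \<in> C"
    and closed: "ucc_closure C \<subseteq> C"
    using C unfolding closed_shift_invariant_subspace_def by blast+
  have sums: "(\<lambda>y. \<Sum>i<n. \<phi> (y + real i * s)) \<in> C" for n s
  proof (induction n)
    case 0
    then show ?case
      using scale[OF \<phi>(1), of 0] by simp
  next
    case (Suc n)
    then show ?case
      using add[OF Suc shift[OF \<phi>(1)]] by simp
  qed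
  have "(\<lambda>y. integral {y..y+h} \<phi> / h) \<in> ucc_closure C"
  proof (rule ucc_closureI)
    fix K :: "real set" and \<epsilon> :: real
    assume "compact K" "0 < \<epsilon>"
    then obtain n where "0 < n" "\<And>y. y \<in> K \<Longrightarrow>
        \<bar>integral {y..y+h} \<phi> / h - (\<Sum>i<n. \<phi> (y + real i * (h / real n))) / real n\<bar> < \<epsilon>"
      using moving_average_riemann_sums[OF \<phi>(2) _ h] by blast
    moreover have "(\<lambda>y. 1 / real n * (\<Sum>i<n. \<phi> (y + real i * (h / real n)))) \<in> C"
      by (rule scale[OF sums])
    ultimately show "\<exists>g\<in>C. \<forall>y\<in>K. \<bar>integral {y..y+h} \<phi> / h - g y\<bar> < \<epsilon>"
      by (intro bexI) auto
  qed
  then show ?thesis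
    using closed by blast
qed

lemma has_real_derivative_moving_integral:
  fixes \<phi> :: "real \<Rightarrow> real"
  assumes \<phi>: "continuous_on UNIV \<phi>" and h: "0 \<le> h"
  shows "((\<lambda>z. integral {z..z+h} \<phi>) has_real_derivative \<phi> (y + h) - \<phi> y) (at y)"
proof -
  define a where "a = y - 1"
  define F where "F z = integral {a..z} \<phi>" for z
  have F: "(F has_real_derivative \<phi> t) (at t)" if "a < t" for t
  proof -
    have "(F has_real_derivative \<phi> t) (at t within {a..t+1})"
      unfolding F_def using that
      by (intro integral_has_real_derivative continuous_on_subset[OF \<phi>]) auto
    moreover have "at t within {a..t+1} = at t"
      using that by (intro at_within_interior) auto
    ultimately show ?thesis
      by simp
  qed
  have "((\<lambda>z. F (z + h) - F z) has_real_derivative \<phi> (y + h) - \<phi> y) (at y)"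
    using DERIV_shift[of F "\<phi> (y + h)" y h] F[of "y + h"] F[of y] h
    by (intro DERIV_diff) (auto simp: a_def)
  then show ?thesis
  proof (rule has_field_derivative_transform_within_open[where S = "{a<..}"])
    fix z :: real
    assume "z \<in> {a<..}"
    then have "integral {a..z} \<phi> + integral {z..z+h} \<phi> = integral {a..z+h} \<phi>"
      using h by (intro Henstock_Kurzweil_Integration.integral_combine integrable_continuous_real
          continuous_on_subset[OF \<phi>]) auto
    then show "F (z + h) - F z = integral {z..z+h} \<phi>"
      unfolding F_def by simp
  qed (auto simp: a_def)
qed

lemma has_real_derivative_uniform_on_compact:
  fixes \<sigma> \<sigma>' :: "real \<Rightarrow> real"
  assumes \<sigma>: "\<And>x. (\<sigma> has_real_derivative \<sigma>' x) (at x)" and \<sigma>': "continuous_on UNIV \<sigma>'"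
    and K: "compact K" and \<epsilon>: "0 < \<epsilon>"
  obtains \<delta> where "0 < \<delta>" "\<And>u t. u \<in> K \<Longrightarrow> \<bar>t\<bar> < \<delta> \<Longrightarrow> \<bar>\<sigma> (u + t) - \<sigma> u - t * \<sigma>' u\<bar> \<le> \<epsilon> * \<bar>t\<bar>"
proof -
  obtain R where R: "\<And>u. u \<in> K \<Longrightarrow> \<bar>u\<bar> \<le> R"
    using K by (metis bounded_real compact_imp_bounded)
  have "uniformly_continuous_on {-R-1..R+1} \<sigma>'"
    by (meson \<sigma>' compact_Icc compact_uniformly_continuous continuous_on_subset top_greatest)
  then obtain d where d: "0 < d"
    "\<And>x x'. x \<in> {-R-1..R+1} \<Longrightarrow> x' \<in> {-R-1..R+1} \<Longrightarrow> dist x' x < d \<Longrightarrow> dist (\<sigma>' x') (\<sigma>' x) < \<epsilon>"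
    using \<epsilon> unfolding uniformly_continuous_on_def by metis
  have bound: "\<bar>\<sigma> (u + t) - \<sigma> u - t * \<sigma>' u\<bar> \<le> \<epsilon> * \<bar>t\<bar>"
    if u: "u \<in> K" and t: "\<bar>t\<bar> < min d 1" for u t
  proof -
    let ?g = "\<lambda>s. \<sigma> (u + s) - \<sigma>' u * s"
    have "((\<lambda>s. \<sigma> (s + u)) has_real_derivative \<sigma>' (s + u)) (at s)" for s
      using DERIV_shift[of \<sigma> "\<sigma>' (s + u)" s u] \<sigma>[of "s + u"] by simp
    then have "(?g has_real_derivative \<sigma>' (u + s) - \<sigma>' u * 1) (at s)" for s
      by (intro DERIV_diff DERIV_cmult DERIV_ident) (simp add: add.commute)
    then have "(?g has_real_derivative \<sigma>' (u + s) - \<sigma>' u) (at s within {-\<bar>t\<bar>..\<bar>t\<bar>})" for s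
      by (simp add: has_field_derivative_at_within)
    moreover have "norm (\<sigma>' (u + s) - \<sigma>' u) \<le> \<epsilon>" if s: "s \<in> {-\<bar>t\<bar>..\<bar>t\<bar>}" for s
    proof -
      have "dist (u + s) u < d"
        using s t by (auto simp: dist_real_def)
      moreover have "u \<in> {-R-1..R+1}" "u + s \<in> {-R-1..R+1}"
        using R[OF u] s t by (auto simp: abs_le_iff)
      ultimately show ?thesis
        using d(2)[of u "u + s"] by (simp add: dist_real_def)
    qed
    ultimately have "norm (?g t - ?g 0) \<le> \<epsilon> * norm (t - 0)"
      by (intro field_differentiable_bound[where S = "{-\<bar>t\<bar>..\<bar>t\<bar>}"]) auto
    then show ?thesis
      by (simp add: mult.commute)
  qed
  show ?thesis
    using d(1) bound by (intro that[of "min d 1"]) auto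
qed

text \<open>Integrating the hypothesis over \<open>h \<in> [0, 1]\<close> writes \<open>\<phi>\<close> as a moving integral up to a constant;
  the moving integral has constant derivative \<open>\<phi> 1 - \<phi> 0\<close>.\<close>
lemma affine_if_constant_differences:
  fixes \<phi> :: "real \<Rightarrow> real"
  assumes \<phi>: "continuous_on UNIV \<phi>" and diff: "\<And>y h. 0 < h \<Longrightarrow> \<phi> (y + h) - \<phi> y = \<phi> h - \<phi> 0"
  shows "\<phi> x = (\<phi> 1 - \<phi> 0) * x + \<phi> 0"
proof -
  define I where "I y = integral {y..y+1} \<phi>" for y
  have "(I has_real_derivative \<phi> 1 - \<phi> 0) (at y)" for y
    using has_real_derivative_moving_integral[OF \<phi>, of 1 y] diff[where y = y and h = 1] unfolding I_def by simp
  then have "((\<lambda>y. I y - (\<phi> 1 - \<phi> 0) * y) has_real_derivative (\<phi> 1 - \<phi> 0) - (\<phi> 1 - \<phi> 0) * 1) (at y)"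
    for y by (intro DERIV_diff DERIV_cmult DERIV_ident)
  then have "I x - (\<phi> 1 - \<phi> 0) * x = I 0 - (\<phi> 1 - \<phi> 0) * 0"
    by (intro DERIV_isconst_all) simp
  then have I_affine: "I x - I 0 = (\<phi> 1 - \<phi> 0) * x"
    by simp
  have shifted: "\<phi> (t + x) = \<phi> t + (\<phi> x - \<phi> 0)" if "0 \<le> t" for t
    using diff[where y = x and h = t] that by (cases "t = 0") (auto simp: add.commute)
  have "I x = integral {0..1} (\<lambda>t. \<phi> (t + x))"
    using integral_shift_real_ivl[where a = x and b = "x + 1" and c = x and f = \<phi>] unfolding I_def by simp
  also have "\<dots> = integral {0..1} (\<lambda>t. \<phi> t + (\<phi> x - \<phi> 0))"
    by (rule integral_cong) (simp add: shifted)
  also have "\<dots> = I 0 + (\<phi> x - \<phi> 0)"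
    unfolding I_def by (simp add: integral_add integrable_continuous_real continuous_on_subset[OF \<phi>])
  finally show ?thesis
    using I_affine by simp
qed

section \<open>One hidden layer in one variable\<close>

definition shallow_closure :: "(real \<Rightarrow> real) \<Rightarrow> (real \<Rightarrow> real) set" where
  "shallow_closure \<zeta> = ucc_closure (deep_net \<zeta> (Suc 0))"

lemma ucc_closure_shallow_closure: "ucc_closure (shallow_closure \<zeta>) = shallow_closure \<zeta>"
  unfolding shallow_closure_def by (rule ucc_closure_ucc_closure)

lemma shallow_closure_add:
  "f \<in> shallow_closure \<zeta> \<Longrightarrow> g \<in> shallow_closure \<zeta> \<Longrightarrow> (\<lambda>y. f y + g y) \<in> shallow_closure \<zeta>"
  unfolding shallow_closure_def by (rule ucc_closure_add[OF deep_net_add])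

lemma shallow_closure_scale: "f \<in> shallow_closure \<zeta> \<Longrightarrow> (\<lambda>y. c * f y) \<in> shallow_closure \<zeta>"
  unfolding shallow_closure_def
  using deep_net_affine[of _ \<zeta> "Suc 0" c 0] by (intro ucc_closure_scale) auto

lemma shallow_closure_neuron: "(\<lambda>y. \<zeta> (l * y + b)) \<in> shallow_closure \<zeta>"
  using deep_net_neuron[OF deep_net_0I[of l b \<zeta>]] subset_ucc_closure
  unfolding shallow_closure_def by (auto simp: inner_real_def)

text \<open>The \<open>k\<close>-th derivative of \<open>\<phi> (l * y + b)\<close> with respect to the weight \<open>l\<close> is \<open>y ^ k\<close> times
  the \<open>k\<close>-th derivative of \<open>\<phi>\<close> at \<open>l * y + b\<close>; the argument climbs through these classes to reach
  the monomials \<open>y ^ k\<close>.\<close>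
definition ridge_moments :: "(real \<Rightarrow> real) \<Rightarrow> nat \<Rightarrow> (real \<Rightarrow> real) set" where
  "ridge_moments \<zeta> k = {\<phi>. \<forall>l b. (\<lambda>y. y ^ k * \<phi> (l * y + b)) \<in> shallow_closure \<zeta>}"

lemma closed_shift_invariant_ridge_moments: "closed_shift_invariant_subspace (ridge_moments \<zeta> k)"
  unfolding closed_shift_invariant_subspace_def
proof (intro conjI ballI allI subsetI)
  fix f g
  assume "f \<in> ridge_moments \<zeta> k" "g \<in> ridge_moments \<zeta> k"
  then have "(\<lambda>y. y ^ k * f (l * y + b) + y ^ k * g (l * y + b)) \<in> shallow_closure \<zeta>" for l b
    unfolding ridge_moments_def by (intro shallow_closure_add) auto
  then show "(\<lambda>y. f y + g y) \<in> ridge_moments \<zeta> k"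
    unfolding ridge_moments_def by (simp add: distrib_left)
next
  fix f c
  assume "f \<in> ridge_moments \<zeta> k"
  then have "(\<lambda>y. c * (y ^ k * f (l * y + b))) \<in> shallow_closure \<zeta>" for l b
    unfolding ridge_moments_def by (intro shallow_closure_scale) auto
  then show "(\<lambda>y. c * f y) \<in> ridge_moments \<zeta> k"
    unfolding ridge_moments_def by (simp add: mult.left_commute)
next
  fix f t
  assume "f \<in> ridge_moments \<zeta> k"
  then have "(\<lambda>y. y ^ k * f (l * y + (b + t))) \<in> shallow_closure \<zeta>" for l b
    unfolding ridge_moments_def by blast
  then show "(\<lambda>y. f (y + t)) \<in> ridge_moments \<zeta> k"
    unfolding ridge_moments_def by (simp add: add.assoc)
next
  fix f
  assume f: "f \<in> ucc_closure (ridge_moments \<zeta> k)"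
  have "(\<lambda>y. y ^ k * f (l * y + b)) \<in> ucc_closure (shallow_closure \<zeta>)" for l b
    by (rule ucc_closure_weighted_compose[OF _ _ f]) (auto simp: ridge_moments_def intro!: continuous_intros)
  then show "f \<in> ridge_moments \<zeta> k"
    unfolding ridge_moments_def by (simp add: ucc_closure_shallow_closure)
qed

lemma weighted_difference_quotient_bound:
  fixes \<sigma> :: "real \<Rightarrow> real"
  assumes "\<bar>\<sigma> (u + \<eta> * y) - \<sigma> u - \<eta> * y * \<sigma>' u\<bar> \<le> e * \<bar>\<eta> * y\<bar>" "0 < \<eta>"
  shows "\<bar>y ^ Suc k * \<sigma>' u - y ^ k * (\<sigma> (u + \<eta> * y) - \<sigma> u) / \<eta>\<bar> \<le> \<bar>y\<bar> ^ Suc k * e"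
proof -
  have "y ^ Suc k * \<sigma>' u - y ^ k * (\<sigma> (u + \<eta> * y) - \<sigma> u) / \<eta>
      = - (y ^ k / \<eta>) * (\<sigma> (u + \<eta> * y) - \<sigma> u - \<eta> * y * \<sigma>' u)"
    using assms(2) by (simp add: field_simps)
  then have "\<bar>y ^ Suc k * \<sigma>' u - y ^ k * (\<sigma> (u + \<eta> * y) - \<sigma> u) / \<eta>\<bar>
      = \<bar>y\<bar> ^ k / \<eta> * \<bar>\<sigma> (u + \<eta> * y) - \<sigma> u - \<eta> * y * \<sigma>' u\<bar>"
    using assms(2) by (simp add: abs_mult power_abs)
  also have "\<dots> \<le> \<bar>y\<bar> ^ k / \<eta> * (e * \<bar>\<eta> * y\<bar>)"
    using assms by (intro mult_left_mono) auto
  also have "\<dots> = \<bar>y\<bar> ^ Suc k * e"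
    using assms(2) by (simp add: abs_mult)
  finally show ?thesis .
qed

lemma weight_difference_quotients_uniform:
  fixes \<sigma> \<sigma>' :: "real \<Rightarrow> real"
  assumes \<sigma>: "\<And>x. (\<sigma> has_real_derivative \<sigma>' x) (at x)" "continuous_on UNIV \<sigma>'"
    and K: "compact K" and \<epsilon>: "0 < \<epsilon>"
  obtains \<eta> where "0 < \<eta>"
    "\<And>y. y \<in> K \<Longrightarrow> \<bar>y ^ Suc k * \<sigma>' (l * y + b) - y ^ k * (\<sigma> ((l + \<eta>) * y + b) - \<sigma> (l * y + b)) / \<eta>\<bar> < \<epsilon>"
proof -
  obtain R0 where R0: "\<And>y. y \<in> K \<Longrightarrow> \<bar>y\<bar> \<le> R0"
    using K by (metis bounded_real compact_imp_bounded)
  define R where "R = \<bar>R0\<bar> + 1"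
  have R: "\<And>y. y \<in> K \<Longrightarrow> \<bar>y\<bar> < R" "0 < R"
    using R0 unfolding R_def by (smt (verit))+
  define M where "M = R ^ Suc k"
  have M: "0 < M" "\<And>y. y \<in> K \<Longrightarrow> \<bar>y\<bar> ^ Suc k \<le> M"
    using R unfolding M_def by (simp, meson abs_ge_zero less_imp_le power_mono)
  have "compact ((\<lambda>y. l * y + b) ` K)"
    using K by (intro compact_continuous_image) (auto intro!: continuous_intros)
  then obtain \<delta> where \<delta>: "0 < \<delta>" and first_order: "\<And>u t. u \<in> (\<lambda>y. l * y + b) ` K \<Longrightarrow> \<bar>t\<bar> < \<delta> \<Longrightarrow>
      \<bar>\<sigma> (u + t) - \<sigma> u - t * \<sigma>' u\<bar> \<le> \<epsilon> / (2 * M) * \<bar>t\<bar>"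
    using has_real_derivative_uniform_on_compact[OF \<sigma>] \<epsilon> M(1) by (metis divide_pos_pos mult_pos_pos zero_less_numeral)
  define \<eta> where "\<eta> = \<delta> / R"
  have \<eta>: "0 < \<eta>"
    using \<delta> R(2) by (simp add: \<eta>_def)
  have "\<bar>y ^ Suc k * \<sigma>' (l * y + b) - y ^ k * (\<sigma> ((l + \<eta>) * y + b) - \<sigma> (l * y + b)) / \<eta>\<bar> < \<epsilon>"
    if y: "y \<in> K" for y
  proof -
    have "\<bar>\<eta> * y\<bar> < \<delta>"
      using R y \<delta> by (simp add: \<eta>_def abs_mult field_simps)
    then have "\<bar>y ^ Suc k * \<sigma>' (l * y + b) - y ^ k * (\<sigma> (l * y + b + \<eta> * y) - \<sigma> (l * y + b)) / \<eta>\<bar>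
        \<le> \<bar>y\<bar> ^ Suc k * (\<epsilon> / (2 * M))"
      using first_order[of "l * y + b" "\<eta> * y"] y \<eta> by (intro weighted_difference_quotient_bound) auto
    also have "\<dots> \<le> M * (\<epsilon> / (2 * M))"
      using M y \<epsilon> by (intro mult_right_mono) auto
    also have "\<dots> < \<epsilon>"
      using M(1) \<epsilon> by simp
    finally show ?thesis
      by (simp add: algebra_simps)
  qed
  then show ?thesis
    using that \<eta> by blast
qed

lemma derivative_in_ridge_moments:
  assumes "\<sigma> \<in> ridge_moments \<zeta> k"
    and "\<And>x. (\<sigma> has_real_derivative \<sigma>' x) (at x)" "continuous_on UNIV \<sigma>'"
  shows "\<sigma>' \<in> ridge_moments \<zeta> (Suc k)"
proof -
  have "(\<lambda>y. y ^ Suc k * \<sigma>' (l * y + b)) \<in> ucc_closure (shallow_closure \<zeta>)" for l b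
  proof (rule ucc_closureI)
    fix K :: "real set" and \<epsilon> :: real
    assume "compact K" "0 < \<epsilon>"
    then obtain \<eta> where \<eta>: "0 < \<eta>" and close: "\<And>y. y \<in> K \<Longrightarrow>
        \<bar>y ^ Suc k * \<sigma>' (l * y + b) - y ^ k * (\<sigma> ((l + \<eta>) * y + b) - \<sigma> (l * y + b)) / \<eta>\<bar> < \<epsilon>"
      using weight_difference_quotients_uniform[OF assms(2,3)] by metis
    have "(\<lambda>y. 1 / \<eta> * (y ^ k * \<sigma> ((l + \<eta>) * y + b)) + (- 1 / \<eta>) * (y ^ k * \<sigma> (l * y + b)))
        \<in> shallow_closure \<zeta>"
      using assms(1) unfolding ridge_moments_def by (intro shallow_closure_add shallow_closure_scale) auto
    moreover have "1 / \<eta> * (y ^ k * \<sigma> ((l + \<eta>) * y + b)) + (- 1 / \<eta>) * (y ^ k * \<sigma> (l * y + b))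
        = y ^ k * (\<sigma> ((l + \<eta>) * y + b) - \<sigma> (l * y + b)) / \<eta>" for y
      using \<eta> by (simp add: field_simps)
    ultimately show "\<exists>g\<in>shallow_closure \<zeta>. \<forall>y\<in>K. \<bar>y ^ Suc k * \<sigma>' (l * y + b) - g y\<bar> < \<epsilon>"
      using close by (intro bexI) auto
  qed
  then show ?thesis
    unfolding ridge_moments_def by (simp add: ucc_closure_shallow_closure)
qed

lemma difference_quotient_in_ridge_moments:
  assumes \<phi>: "\<phi> \<in> ridge_moments \<zeta> k" "continuous_on UNIV \<phi>" and h: "0 < h"
  shows "(\<lambda>y. (\<phi> (y + h) - \<phi> y) / h) \<in> ridge_moments \<zeta> (Suc k)"
proof (rule derivative_in_ridge_moments)
  show "(\<lambda>y. integral {y..y+h} \<phi> / h) \<in> ridge_moments \<zeta> k"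
    by (rule moving_average_mem[OF closed_shift_invariant_ridge_moments \<phi> h])
  show "((\<lambda>y. integral {y..y+h} \<phi> / h) has_real_derivative (\<phi> (y + h) - \<phi> y) / h) (at y)" for y
    using h by (intro DERIV_cdivide has_real_derivative_moving_integral[OF \<phi>(2)]) simp
  show "continuous_on UNIV (\<lambda>y. (\<phi> (y + h) - \<phi> y) / h)"
    using h by (intro continuous_intros continuous_on_compose2[OF \<phi>(2)]) auto
qed

lemma power_in_shallow_closure:
  assumes \<phi>: "\<phi> \<in> ridge_moments \<zeta> k" "continuous_on UNIV \<phi>" and "\<phi> x \<noteq> \<phi> x'"
  shows "(\<lambda>y. y ^ Suc k) \<in> shallow_closure \<zeta>"
proof -
  obtain a c where ac: "a < c" "\<phi> a \<noteq> \<phi> c"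
    using assms(3) by (metis linorder_neqE_linordered_idom)
  define \<Delta> where "\<Delta> y = (\<phi> (y + (c - a)) - \<phi> y) / (c - a)" for y
  have "\<Delta> \<in> ridge_moments \<zeta> (Suc k)"
    unfolding \<Delta>_def[abs_def] using ac by (intro difference_quotient_in_ridge_moments[OF \<phi>]) simp
  then have "(\<lambda>y. y ^ Suc k * \<Delta> (0 * y + a)) \<in> shallow_closure \<zeta>"
    unfolding ridge_moments_def by blast
  then have "(\<lambda>y. 1 / \<Delta> a * (y ^ Suc k * \<Delta> (0 * y + a))) \<in> shallow_closure \<zeta>"
    by (rule shallow_closure_scale)
  moreover have "\<Delta> a \<noteq> 0"
    using ac by (simp add: \<Delta>_def)
  ultimately show ?thesis
    by simp
qed

lemma identity_square_in_shallow_closure: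
  assumes \<zeta>: "continuous_on UNIV \<zeta>" and not_affine: "\<not> (\<exists>a b. \<forall>x. \<zeta> x = a * x + b)"
  shows "(\<lambda>y. y) \<in> shallow_closure \<zeta>" "(\<lambda>y. y ^ 2) \<in> shallow_closure \<zeta>"
proof -
  have \<zeta>_mem: "\<zeta> \<in> ridge_moments \<zeta> 0"
    by (simp add: ridge_moments_def shallow_closure_neuron)
  obtain a c where "\<zeta> a \<noteq> \<zeta> c"
    using not_affine by (metis mult_zero_left add_0)
  then show "(\<lambda>y. y) \<in> shallow_closure \<zeta>"
    using power_in_shallow_closure[OF \<zeta>_mem \<zeta>] by simp
  obtain h y where hy: "0 < h" "\<zeta> (y + h) - \<zeta> y \<noteq> \<zeta> h - \<zeta> 0"
    using affine_if_constant_differences[OF \<zeta>] not_affine by blast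
  define \<Delta> where "\<Delta> y = (\<zeta> (y + h) - \<zeta> y) / h" for y
  have "\<Delta> \<in> ridge_moments \<zeta> (Suc 0)"
    unfolding \<Delta>_def[abs_def] by (rule difference_quotient_in_ridge_moments[OF \<zeta>_mem \<zeta> hy(1)])
  moreover have "continuous_on UNIV \<Delta>"
    unfolding \<Delta>_def using hy(1) by (intro continuous_intros continuous_on_compose2[OF \<zeta>]) auto
  moreover have "\<Delta> y \<noteq> \<Delta> 0"
    using hy by (simp add: \<Delta>_def divide_cancel_right)
  ultimately show "(\<lambda>y. y ^ 2) \<in> shallow_closure \<zeta>"
    using power_in_shallow_closure by (metis numeral_2_eq_2 One_nat_def)
qed

section \<open>Deep networks are dense\<close>

lemma shallow_closure_compose_deep:
  assumes \<zeta>: "continuous_on UNIV \<zeta>" and \<psi>: "\<psi> \<in> shallow_closure \<zeta>" "continuous_on UNIV \<psi>"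
    and u: "continuous_on UNIV u" "u \<in> ucc_closure (deep_net \<zeta> L)"
  shows "\<psi> \<circ> u \<in> ucc_closure (deep_net \<zeta> (Suc L))"
proof (rule ucc_closure_compose_left[OF \<psi>(2) u])
  fix v
  assume "v \<in> deep_net \<zeta> L"
  then show "\<psi> \<circ> v \<in> ucc_closure (deep_net \<zeta> (Suc L))"
    using \<psi>(1) unfolding shallow_closure_def
    by (intro ucc_closure_compose_right deep_net_continuous[OF \<zeta>] deep_net_compose)
qed

lemma ucc_closure_deep_net_add:
  "f \<in> ucc_closure (deep_net \<zeta> L) \<Longrightarrow> g \<in> ucc_closure (deep_net \<zeta> L) \<Longrightarrow>
    (\<lambda>x. f x + g x) \<in> ucc_closure (deep_net \<zeta> L)"
  by (rule ucc_closure_add) (auto intro: deep_net_add)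

lemma ucc_closure_deep_net_scale:
  "f \<in> ucc_closure (deep_net \<zeta> L) \<Longrightarrow> (\<lambda>x. c * f x) \<in> ucc_closure (deep_net \<zeta> L)"
  by (rule ucc_closure_scale) (use deep_net_affine[where b = 0] in auto)

lemma real_linear_eq_inner:
  fixes f :: "'a::euclidean_space \<Rightarrow> real"
  assumes "bounded_linear f"
  shows "f = inner (\<Sum>b\<in>Basis. f b *\<^sub>R b)"
proof
  fix x
  interpret bounded_linear f by fact
  have "f x = f (\<Sum>b\<in>Basis. (x \<bullet> b) *\<^sub>R b)"
    by (simp add: euclidean_representation)
  also have "\<dots> = (\<Sum>b\<in>Basis. f b * inner b x)"
    by (simp add: sum scale inner_commute mult.commute)
  also have "\<dots> = inner (\<Sum>b\<in>Basis. f b *\<^sub>R b) x"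
    by (simp add: inner_sum_left)
  finally show "f x = inner (\<Sum>b\<in>Basis. f b *\<^sub>R b) x" .
qed

lemma continuous_in_ucc_closure_polynomials:
  fixes f :: "'a::euclidean_space \<Rightarrow> real"
  assumes "continuous_on UNIV f"
  shows "f \<in> ucc_closure {p. real_polynomial_function p}"
proof (rule ucc_closureI)
  fix K :: "'a set" and \<epsilon> :: real
  assume "compact K" "0 < \<epsilon>"
  then obtain p where "polynomial_function p" "\<forall>x\<in>K. norm (f x - p x) < \<epsilon>"
    using Stone_Weierstrass_polynomial_function continuous_on_subset[OF assms subset_UNIV] by metis
  then show "\<exists>p\<in>{p. real_polynomial_function p}. \<forall>x\<in>K. \<bar>f x - p x\<bar> < \<epsilon>"
    by (auto simp: real_polynomial_function_eq)
qed

definition deep_net_limits :: "(real \<Rightarrow> real) \<Rightarrow> ('a::real_inner \<Rightarrow> real) set" where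
  "deep_net_limits \<zeta> = {f. continuous_on UNIV f \<and> (\<exists>L. f \<in> ucc_closure (deep_net \<zeta> L))}"

context
  fixes \<zeta> :: "real \<Rightarrow> real"
  assumes \<zeta>: "continuous_on UNIV \<zeta>" and not_affine: "\<not> (\<exists>a b. \<forall>x. \<zeta> x = a * x + b)"
begin

lemma ucc_closure_deep_net_Suc:
  "continuous_on UNIV f \<Longrightarrow> f \<in> ucc_closure (deep_net \<zeta> L) \<Longrightarrow> f \<in> ucc_closure (deep_net \<zeta> (Suc L))"
  using shallow_closure_compose_deep[OF \<zeta> identity_square_in_shallow_closure(1)[OF \<zeta> not_affine]]
  by (simp add: o_def continuous_on_id)

lemma ucc_closure_deep_net_mono:
  assumes "continuous_on UNIV f" "f \<in> ucc_closure (deep_net \<zeta> L)" "L \<le> L'"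
  shows "f \<in> ucc_closure (deep_net \<zeta> L')"
  using assms(3)
proof (induction L' rule: dec_induct)
  case base
  show ?case
    by (rule assms(2))
next
  case (step L')
  show ?case
    by (rule ucc_closure_deep_net_Suc[OF assms(1) step.IH])
qed

lemma deep_net_limits_common_depth:
  assumes "f \<in> deep_net_limits \<zeta>" "g \<in> deep_net_limits \<zeta>"
  obtains L where "f \<in> ucc_closure (deep_net \<zeta> L)" "g \<in> ucc_closure (deep_net \<zeta> L)"
proof -
  obtain L L' where fL: "f \<in> ucc_closure (deep_net \<zeta> L)" and gL: "g \<in> ucc_closure (deep_net \<zeta> L')"
    using assms by (auto simp: deep_net_limits_def)
  have cont: "continuous_on UNIV f" "continuous_on UNIV g"
    using assms by (simp_all add: deep_net_limits_def)
  show thesis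
  proof (rule that)
    show "f \<in> ucc_closure (deep_net \<zeta> (max L L'))"
      by (rule ucc_closure_deep_net_mono[OF cont(1) fL]) simp
    show "g \<in> ucc_closure (deep_net \<zeta> (max L L'))"
      by (rule ucc_closure_deep_net_mono[OF cont(2) gL]) simp
  qed
qed

lemma deep_net_limits_add:
  assumes "f \<in> deep_net_limits \<zeta>" "g \<in> deep_net_limits \<zeta>"
  shows "(\<lambda>x. f x + g x) \<in> deep_net_limits \<zeta>"
proof -
  obtain L where "f \<in> ucc_closure (deep_net \<zeta> L)" "g \<in> ucc_closure (deep_net \<zeta> L)"
    using assms by (rule deep_net_limits_common_depth)
  then have "(\<lambda>x. f x + g x) \<in> ucc_closure (deep_net \<zeta> L)"
    by (rule ucc_closure_deep_net_add)
  then show ?thesis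
    using assms by (auto simp: deep_net_limits_def intro: continuous_on_add)
qed

lemma deep_net_limits_mult:
  fixes f g :: "'a::real_inner \<Rightarrow> real"
  assumes f: "f \<in> deep_net_limits \<zeta>" and g: "g \<in> deep_net_limits \<zeta>"
  shows "(\<lambda>x. f x * g x) \<in> deep_net_limits \<zeta>"
proof -
  obtain L where fL: "f \<in> ucc_closure (deep_net \<zeta> L)" and gL: "g \<in> ucc_closure (deep_net \<zeta> L)"
    using assms by (rule deep_net_limits_common_depth)
  have cont: "continuous_on UNIV f" "continuous_on UNIV g"
    using assms by (simp_all add: deep_net_limits_def)
  have "continuous_on UNIV (\<lambda>x. f x + c * g x)" for c
    using cont by (intro continuous_on_add continuous_on_mult continuous_on_const)
  moreover have "(\<lambda>x. f x + c * g x) \<in> ucc_closure (deep_net \<zeta> L)" for c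
    by (intro ucc_closure_deep_net_add ucc_closure_deep_net_scale fL gL)
  moreover have square: "(\<lambda>x. (u x)\<^sup>2) \<in> ucc_closure (deep_net \<zeta> (Suc L))"
    if "continuous_on UNIV u" "u \<in> ucc_closure (deep_net \<zeta> L)" for u :: "'a \<Rightarrow> real"
  proof -
    have "continuous_on UNIV (\<lambda>y::real. y\<^sup>2)"
      by (intro continuous_on_power continuous_on_id)
    then show ?thesis
      using shallow_closure_compose_deep[OF \<zeta> identity_square_in_shallow_closure(2)[OF \<zeta> not_affine] _ that]
      by (simp add: o_def)
  qed
  ultimately have "(\<lambda>x. (f x + c * g x)\<^sup>2) \<in> ucc_closure (deep_net \<zeta> (Suc L))" for c
    by blast
  then have "(\<lambda>x. 1/4 * (f x + 1 * g x)\<^sup>2 + (-1/4) * (f x + (-1) * g x)\<^sup>2) \<in> ucc_closure (deep_net \<zeta> (Suc L))"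
    by (intro ucc_closure_deep_net_add ucc_closure_deep_net_scale)
  then have "(\<lambda>x. f x * g x) \<in> ucc_closure (deep_net \<zeta> (Suc L))"
    by (simp add: power2_eq_square algebra_simps)
  then show ?thesis
    using cont by (auto simp: deep_net_limits_def intro: continuous_on_mult)
qed

lemma polynomial_in_deep_net_limits:
  fixes p :: "'a::euclidean_space \<Rightarrow> real"
  assumes "real_polynomial_function p"
  shows "p \<in> deep_net_limits \<zeta>"
  using assms
proof (induction rule: real_polynomial_function.induct)
  case (linear f)
  then have "f = (\<lambda>x. inner (\<Sum>b\<in>Basis. f b *\<^sub>R b) x + 0)"
    using real_linear_eq_inner by simp
  then have "f \<in> deep_net \<zeta> 0"
    by (metis deep_net_0I)
  then show ?case
    using subset_ucc_closure deep_net_continuous[OF \<zeta>] by (auto simp: deep_net_limits_def)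
next
  case (const c)
  have "(\<lambda>x::'a. c) \<in> deep_net \<zeta> 0"
    using deep_net_0I[of 0 c \<zeta>] by simp
  then show ?case
    using subset_ucc_closure deep_net_continuous[OF \<zeta>] by (auto simp: deep_net_limits_def)
qed (auto intro: deep_net_limits_add deep_net_limits_mult)

lemma dense_ucc_mlp: "dense_ucc (mlp \<zeta> :: ('a::euclidean_space \<Rightarrow> real) set)"
proof -
  have "{p. real_polynomial_function p} \<subseteq> ucc_closure (mlp \<zeta> :: ('a \<Rightarrow> real) set)"
  proof
    fix p :: "'a \<Rightarrow> real"
    assume "p \<in> {p. real_polynomial_function p}"
    then have "p \<in> deep_net_limits \<zeta>"
      by (simp add: polynomial_in_deep_net_limits)
    then obtain L where "continuous_on UNIV p" "p \<in> ucc_closure (deep_net \<zeta> L)"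
      by (auto simp: deep_net_limits_def)
    then have "p \<in> ucc_closure (deep_net \<zeta> (Suc L))"
      by (rule ucc_closure_deep_net_Suc)
    then show "p \<in> ucc_closure (mlp \<zeta>)"
      using ucc_closure_mono[OF deep_net_Suc_subset_mlp] by blast
  qed
  then have "ucc_closure {p. real_polynomial_function p} \<subseteq> ucc_closure (ucc_closure (mlp \<zeta> :: ('a \<Rightarrow> real) set))"
    by (rule ucc_closure_mono)
  then show ?thesis
    unfolding dense_ucc_iff_ucc_closure ucc_closure_ucc_closure
    using continuous_in_ucc_closure_polynomials by blast
qed

end

section \<open>The residual graph convolution\<close>

lemma conv_res_nth:
  "conv_res A W X $ i $ j = (\<Sum>k\<in>UNIV. (\<Sum>l\<in>UNIV. A $ i $ l * X $ l $ k) * W $ k $ j) + X $ i $ j"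
  unfolding conv_res_def by (simp add: matrix_matrix_mult_def)

lemma linear_conv_res: "linear (conv_res A W)"
  by (rule linearI) (simp_all add: vec_eq_iff conv_res_nth algebra_simps sum.distrib sum_distrib_left)

text \<open>An entry of maximal modulus of a nonzero kernel element \<open>X\<close> would equal minus the
  corresponding entry of \<open>A X W\<close>, whose modulus is strictly smaller under the two norm bounds.\<close>
lemma inj_conv_res:
  fixes A :: "real^'n^'n" and W :: "real^'d^'d"
  assumes A: "\<And>i. (\<Sum>l\<in>UNIV. \<bar>A $ i $ l\<bar>) \<le> 1" and W: "\<And>j. (\<Sum>k\<in>UNIV. \<bar>W $ k $ j\<bar>) < 1"
  shows "inj (conv_res A W)"
  unfolding linear_injective_0[OF linear_conv_res]
proof (intro allI impI)
  fix X :: "real^'d^'n"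
  assume X: "conv_res A W X = 0"
  define m where "m = Max (range (\<lambda>(i, j). \<bar>X $ i $ j\<bar>))"
  have m: "\<bar>X $ i $ j\<bar> \<le> m" for i j
    unfolding m_def by (rule Max_ge) auto
  have "m \<in> range (\<lambda>(i, j). \<bar>X $ i $ j\<bar>)"
    unfolding m_def by (rule Max_in) auto
  then obtain i0 j0 where m_def': "m = \<bar>X $ i0 $ j0\<bar>"
    by auto
  have row: "\<bar>\<Sum>l\<in>UNIV. A $ i0 $ l * X $ l $ k\<bar> \<le> m" for k
  proof -
    have "\<bar>\<Sum>l\<in>UNIV. A $ i0 $ l * X $ l $ k\<bar> \<le> (\<Sum>l\<in>UNIV. \<bar>A $ i0 $ l\<bar> * m)"
      by (rule order_trans[OF sum_abs sum_mono]) (simp add: abs_mult m mult_left_mono)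
    also have "\<dots> \<le> m"
      using A[of i0] m[of i0 j0] by (simp add: sum_distrib_right[symmetric] mult_left_le_one_le)
    finally show ?thesis .
  qed
  have "m = \<bar>\<Sum>k\<in>UNIV. (\<Sum>l\<in>UNIV. A $ i0 $ l * X $ l $ k) * W $ k $ j0\<bar>"
    using arg_cong[OF X, of "\<lambda>Y. Y $ i0 $ j0"] by (simp add: m_def' conv_res_nth add_eq_0_iff abs_minus_commute)
  also have "\<dots> \<le> (\<Sum>k\<in>UNIV. m * \<bar>W $ k $ j0\<bar>)"
    by (rule order_trans[OF sum_abs sum_mono]) (simp add: abs_mult row mult_right_mono)
  also have "\<dots> = m * (\<Sum>k\<in>UNIV. \<bar>W $ k $ j0\<bar>)"
    by (simp add: sum_distrib_left)
  finally have "m \<le> 0"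
    using W[of j0] by (metis mult_le_cancel_left1 not_le)
  then show "X = 0"
    using m by (simp add: vec_eq_iff) (meson abs_le_zero_iff order.trans)
qed

lemma norm_adj_complete_graph: "norm_adj (complete_graph :: 'n::finite \<Rightarrow> 'n \<Rightarrow> bool) $ i $ j = 1 / real CARD('n)"
proof -
  have "gdeg (complete_graph :: 'n \<Rightarrow> 'n \<Rightarrow> bool) v = real CARD('n)" for v
    unfolding gdeg_def complete_graph_def by (simp add: UNIV_def[symmetric] del: UNIV_def)
  then show ?thesis
    unfolding norm_adj_def complete_graph_def by (simp add: real_sqrt_mult_self)
qed

lemma inj_conv_res_complete_graph:
  fixes W :: "real^'d^'d"
  assumes "\<And>k j. \<bar>W $ k $ j\<bar> < 1 / real CARD('d)"
  shows "inj (conv_res (norm_adj (complete_graph :: 'n::finite \<Rightarrow> 'n \<Rightarrow> bool)) W)"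
proof (rule inj_conv_res)
  show "(\<Sum>l\<in>UNIV. \<bar>norm_adj (complete_graph :: 'n \<Rightarrow> 'n \<Rightarrow> bool) $ i $ l\<bar>) \<le> 1" for i
    by (simp add: norm_adj_complete_graph)
  show "(\<Sum>k\<in>UNIV. \<bar>W $ k $ j\<bar>) < 1" for j
    using sum_strict_mono[of "UNIV :: 'd set" "\<lambda>k. \<bar>W $ k $ j\<bar>" "\<lambda>_. 1 / real CARD('d)"] assms
    by simp
qed

lemma dense_ucc_compose_linear_injective:
  fixes L :: "'a::euclidean_space \<Rightarrow> 'a"
  assumes F: "dense_ucc F" and L: "linear L" "inj L"
  shows "dense_ucc ((\<lambda>m. m \<circ> L) ` F)"
  unfolding dense_ucc_iff_ucc_closure
proof (intro allI impI)
  fix f :: "'a \<Rightarrow> real"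
  assume f: "continuous_on UNIV f"
  obtain L' where L': "linear L'" "\<And>x. L' (L x) = x"
    using linear_injective_left_inverse[OF L] by (metis comp_apply id_apply)
  have "continuous_on UNIV L'"
    using L'(1) by (simp add: linear_continuous_on linear_conv_bounded_linear)
  then have "continuous_on UNIV (f \<circ> L')"
    by (rule continuous_on_compose) (use f continuous_on_subset in blast)
  then have fL': "f \<circ> L' \<in> ucc_closure F"
    using F by (simp add: dense_ucc_iff_ucc_closure)
  have "continuous_on UNIV L"
    using L(1) by (simp add: linear_continuous_on linear_conv_bounded_linear)
  then have "(f \<circ> L') \<circ> L \<in> ucc_closure ((\<lambda>m. m \<circ> L) ` F)"
    by (rule ucc_closure_compose_right[OF _ fL']) auto
  then show "f \<in> ucc_closure ((\<lambda>m. m \<circ> L) ` F)"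
    by (simp add: o_def L'(2))
qed

lemma dense_ucc_mlp_conv_res_complete_graph:
  fixes W :: "real^'d^'d"
  assumes "continuous_on UNIV \<zeta>" "\<not> (\<exists>a b. \<forall>x. \<zeta> x = a * x + b)"
    and "\<And>k j. \<bar>W $ k $ j\<bar> < 1 / real CARD('d)"
  shows "dense_ucc ((\<lambda>m. m \<circ> conv_res (norm_adj (complete_graph :: 'n::finite \<Rightarrow> 'n \<Rightarrow> bool)) W)
    ` (mlp \<zeta> :: (real^'d^'n \<Rightarrow> real) set))"
  using dense_ucc_compose_linear_injective[OF dense_ucc_mlp[OF assms(1,2)] linear_conv_res
      inj_conv_res_complete_graph[OF assms(3)]] .

section \<open>Gaussian weights\<close>

lemma fact_double_div_le: "(fact (2 * m) :: real) / (2 ^ m * fact m) \<le> real m ^ m"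
proof -
  have "fact (2 * m) div fact m \<le> (2 * m) ^ m"
    using fact_div_fact_le_pow[of m "2 * m"] by (simp add: mult_2)
  then have "fact m * (fact (2 * m) div fact m) \<le> fact m * (2 * m) ^ m"
    by (rule mult_le_mono2)
  moreover have "fact m dvd (fact (2 * m) :: nat)"
    by (rule fact_dvd) simp
  ultimately have "fact (2 * m) \<le> fact m * (2 * m) ^ m"
    by simp
  then have "real (fact (2 * m)) \<le> real (fact m * (2 * m) ^ m)"
    by (rule of_nat_mono)
  then have "(fact (2 * m) :: real) \<le> (2 ^ m * fact m) * real m ^ m"
    by (simp add: power_mult_distrib mult_ac)
  then show ?thesis
    by (simp add: divide_le_eq mult.commute)
qed

lemma normal_tail_le:
  fixes \<sigma> t :: real
  assumes \<sigma>: "0 < \<sigma>" and t: "0 < t"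
  shows "measure (density lborel (normal_density 0 \<sigma>)) (UNIV - {-t<..<t}) \<le> (real m * \<sigma>\<^sup>2 / t\<^sup>2) ^ m"
proof -
  let ?N = "density lborel (normal_density 0 \<sigma>)"
  interpret N: prob_space ?N
    using \<sigma> by (rule prob_space_normal_density)
  have moment: "has_bochner_integral lborel (\<lambda>x. normal_density 0 \<sigma> x * x ^ (2 * m))
      (fact (2 * m) / ((2 / \<sigma>\<^sup>2) ^ m * fact m))"
    using normal_moment_even[OF \<sigma>, of 0 m] by simp
  have int: "integrable ?N (\<lambda>x. x ^ (2 * m))"
    using moment by (simp add: has_bochner_integral_iff integrable_density)
  have "UNIV - {-t<..<t} \<subseteq> {x \<in> space ?N. t ^ (2 * m) \<le> x ^ (2 * m)}"
  proof
    fix x :: real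
    assume "x \<in> UNIV - {-t<..<t}"
    then have "t ^ (2 * m) \<le> \<bar>x\<bar> ^ (2 * m)"
      using t by (intro power_mono) auto
    then show "x \<in> {x \<in> space ?N. t ^ (2 * m) \<le> x ^ (2 * m)}"
      by (simp add: power_even_abs)
  qed
  then have "measure ?N (UNIV - {-t<..<t}) \<le> measure ?N {x \<in> space ?N. t ^ (2 * m) \<le> x ^ (2 * m)}"
    by (rule N.finite_measure_mono) simp
  also have "\<dots> \<le> integral\<^sup>L ?N (\<lambda>x. x ^ (2 * m)) / t ^ (2 * m)"
    using t by (intro integral_Markov_inequality_measure[OF int, of UNIV]) (auto simp: zero_le_even_power)
  also have "\<dots> = fact (2 * m) / ((2 / \<sigma>\<^sup>2) ^ m * fact m) / (t\<^sup>2) ^ m"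
    using moment by (simp add: integral_density has_bochner_integral_iff power_mult)
  also have "\<dots> = fact (2 * m) / (2 ^ m * fact m) * (\<sigma>\<^sup>2 / t\<^sup>2) ^ m"
    by (simp add: power_divide)
  also have "\<dots> \<le> real m ^ m * (\<sigma>\<^sup>2 / t\<^sup>2) ^ m"
    by (intro mult_right_mono fact_double_div_le) simp
  finally show ?thesis
    by (simp only: times_divide_eq_right[symmetric] power_mult_distrib)
qed

lemma gauss_matrix_measure_box:
  fixes \<sigma> t :: real
  assumes \<sigma>: "0 < \<sigma>"
  shows "Pi\<^sub>E UNIV (\<lambda>_. {-t<..<t}) \<in> sets (gauss_matrix_measure \<sigma> :: ('d::finite \<times> 'd \<Rightarrow> real) measure)"
    and "measure (gauss_matrix_measure \<sigma> :: ('d \<times> 'd \<Rightarrow> real) measure) (Pi\<^sub>E UNIV (\<lambda>_. {-t<..<t}))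
      = measure (density lborel (normal_density 0 \<sigma>)) {-t<..<t} ^ CARD('d \<times> 'd)"
proof -
  let ?N = "density lborel (normal_density 0 \<sigma>)"
  interpret N: prob_space ?N
    using \<sigma> by (rule prob_space_normal_density)
  interpret P: product_prob_space "\<lambda>_::'d \<times> 'd. ?N" UNIV
    by (intro product_prob_space.intro product_sigma_finite.intro product_prob_space_axioms.intro
        prob_space_imp_sigma_finite N.prob_space_axioms)
  show "Pi\<^sub>E UNIV (\<lambda>_. {-t<..<t}) \<in> sets (gauss_matrix_measure \<sigma> :: ('d \<times> 'd \<Rightarrow> real) measure)"
    unfolding gauss_matrix_measure_def by (rule sets_PiM_I_finite) auto
  have "emeasure (gauss_matrix_measure \<sigma> :: ('d \<times> 'd \<Rightarrow> real) measure) (Pi\<^sub>E UNIV (\<lambda>_. {-t<..<t}))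
      = (\<Prod>i\<in>(UNIV :: ('d \<times> 'd) set). emeasure ?N {-t<..<t})"
    unfolding gauss_matrix_measure_def by (rule P.emeasure_PiM) auto
  also have "\<dots> = ennreal (measure ?N {-t<..<t} ^ CARD('d \<times> 'd))"
    by (simp add: N.emeasure_eq_measure ennreal_power)
  finally show "measure (gauss_matrix_measure \<sigma> :: ('d \<times> 'd \<Rightarrow> real) measure) (Pi\<^sub>E UNIV (\<lambda>_. {-t<..<t}))
      = measure ?N {-t<..<t} ^ CARD('d \<times> 'd)"
    unfolding measure_def by simp
qed

lemma power2_mult_one_over_81_power_le_exp: "real D ^ 2 * (1 / 81) ^ D \<le> exp (- real D / 2)"
proof -
  have "exp (1 / 2 :: real) ^ 2 = exp 1"
    by (simp add: power2_eq_square flip: exp_add)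
  also have "\<dots> \<le> 2 ^ 2"
    using exp_le by simp
  finally have "exp (1 / 2 :: real) \<le> 2"
    by (rule power2_le_imp_le) simp
  then have "exp (1 / 2) ^ D \<le> (2 :: real) ^ D"
    by (intro power_mono) auto
  then have exp_le: "exp (real D / 2) \<le> 2 ^ D"
    by (simp add: exp_of_nat_mult[symmetric])
  have "real D \<le> 2 ^ D"
    using less_exp[of D] by (metis less_imp_le of_nat_le_iff of_nat_numeral of_nat_power)
  then have "real D ^ 2 \<le> 2 ^ D * 2 ^ D"
    by (simp add: power2_eq_square mult_mono)
  then have "real D ^ 2 * exp (real D / 2) \<le> (2 ^ D * 2 ^ D) * 2 ^ D"
    using exp_le by (intro mult_mono) auto
  also have "\<dots> = 8 ^ D"
    by (simp flip: power_mult_distrib)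
  also have "\<dots> \<le> 81 ^ D"
    by (intro power_mono) auto
  finally show ?thesis
    by (simp add: exp_minus field_simps power_one_over)
qed

lemma square_mult_cube_le_of_less:
  fixes \<sigma> :: real
  assumes "0 < \<sigma>" "\<sigma> < 1 / (9 * real D powr (3/2))"
  shows "\<sigma>\<^sup>2 * real D ^ 3 \<le> 1 / 81"
proof (cases "D = 0")
  case False
  then have D: "0 < real D"
    by simp
  have "\<sigma> * (9 * real D powr (3/2)) < 1"
    using assms(2) D by (simp add: pos_less_divide_eq mult.commute)
  then have "(\<sigma> * (9 * real D powr (3/2)))\<^sup>2 < 1"
    using assms(1) power_strict_mono[of "\<sigma> * (9 * real D powr (3/2))" 1 2] by simp
  moreover have "(real D powr (3/2))\<^sup>2 = real D powr real 3"
    using D by (simp add: powr_power)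
  ultimately show ?thesis
    using D by (simp add: power_mult_distrib powr_realpow)
qed simp

lemma gauss_matrix_measure_small_entries:
  fixes \<sigma> :: real
  assumes \<sigma>: "0 < \<sigma>" "\<sigma> < 1 / (9 * real CARD('d) powr (3/2))"
  shows "1 - exp (- real CARD('d) / 2) \<le> measure (gauss_matrix_measure \<sigma> :: ('d::finite \<times> 'd \<Rightarrow> real) measure)
      (Pi\<^sub>E UNIV (\<lambda>_. {- (1 / real CARD('d))<..<1 / real CARD('d)}))"
proof -
  define D where "D = CARD('d)"
  define t where "t = 1 / real D"
  have D: "0 < real D"
    by (simp add: D_def)
  let ?N = "density lborel (normal_density 0 \<sigma>)"
  interpret N: prob_space ?N
    using \<sigma>(1) by (rule prob_space_normal_density)
  define q where "q = measure ?N (UNIV - {-t<..<t})"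
  have q: "0 \<le> q" "q \<le> 1" "measure ?N {-t<..<t} = 1 - q"
    using N.prob_compl[of "{-t<..<t}"] by (simp_all add: q_def)
  have small: "\<sigma>\<^sup>2 * real D ^ 3 \<le> 1 / 81"
    unfolding D_def by (rule square_mult_cube_le_of_less[OF \<sigma>])
  have base: "real D * \<sigma>\<^sup>2 / t\<^sup>2 = \<sigma>\<^sup>2 * real D ^ 3"
    using D by (simp add: t_def field_simps power2_eq_square power3_eq_cube)
  have "q \<le> (real D * \<sigma>\<^sup>2 / t\<^sup>2) ^ D"
    unfolding q_def using \<sigma>(1) D by (intro normal_tail_le) (simp_all add: t_def)
  also have "\<dots> = (\<sigma>\<^sup>2 * real D ^ 3) ^ D"
    by (simp only: base)
  also have "\<dots> \<le> (1 / 81) ^ D"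
    using small by (intro power_mono) auto
  finally have "real (D * D) * q \<le> real D ^ 2 * (1 / 81) ^ D"
    by (simp add: power2_eq_square mult_left_mono)
  then have "1 - exp (- real D / 2) \<le> 1 + real (D * D) * (- q)"
    using power2_mult_one_over_81_power_le_exp[of D] by simp
  also have "\<dots> \<le> (1 - q) ^ (D * D)"
    using Bernoulli_inequality[of "- q" "D * D"] q(2) by simp
  finally show ?thesis
    using gauss_matrix_measure_box(2)[OF \<sigma>(1), of t, where 'd = 'd] q(3) by (simp add: D_def t_def)
qed

lemma affine_imp_poly:
  fixes f :: "real \<Rightarrow> real"
  assumes "\<exists>a b. \<forall>x. f x = a * x + b"
  shows "\<exists>p :: real poly. \<forall>x. f x = poly p x"
proof -
  obtain a b where "\<forall>x. f x = a * x + b"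
    using assms by blast
  then have "\<forall>x. f x = poly [:b, a:] x"
    by (simp add: algebra_simps)
  then show ?thesis
    by blast
qed

theorem theorem3:
  fixes \<zeta> :: "real \<Rightarrow> real" and \<sigma> :: real
  assumes cont: "continuous_on UNIV \<zeta>"
    and act: "(\<not> (\<exists>p :: real poly. \<forall>x. \<zeta> x = poly p x)) \<or>
              ((\<not> (\<exists>a b. \<forall>x. \<zeta> x = a * x + b)) \<and> (\<exists>t. cont_diff_at \<zeta> t \<and> deriv \<zeta> t \<noteq> 0))"
    and sig: "0 < \<sigma>" "\<sigma> < 1 / (9 * real CARD('d) powr (3/2))"
  shows "\<exists>S \<in> sets (gauss_matrix_measure \<sigma> :: (('d::finite \<times> 'd) \<Rightarrow> real) measure).
     S \<subseteq> {w. dense_ucc ((\<lambda>m. m \<circ> conv_res (norm_adj (complete_graph :: 'n::finite \<Rightarrow> 'n \<Rightarrow> bool)) (mat_of w))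
                              ` (mlp \<zeta> :: (real^'d^'n \<Rightarrow> real) set))}
     \<and> measure (gauss_matrix_measure \<sigma>) S \<ge> 1 - exp (- real CARD('d) / 2)"
proof -
  define S :: "('d \<times> 'd \<Rightarrow> real) set"
    where "S = Pi\<^sub>E UNIV (\<lambda>_. {- (1 / real CARD('d))<..<1 / real CARD('d)})"
  text \<open>Either alternative of \<open>act\<close> makes \<open>\<zeta>\<close> non-affine, and nothing more is needed: depth makes
    up for polynomial activations.\<close>
  have not_affine: "\<not> (\<exists>a b. \<forall>x. \<zeta> x = a * x + b)"
    using act affine_imp_poly by blast
  have "S \<subseteq> {w. dense_ucc ((\<lambda>m. m \<circ> conv_res (norm_adj (complete_graph :: 'n \<Rightarrow> 'n \<Rightarrow> bool)) (mat_of w))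
                              ` (mlp \<zeta> :: (real^'d^'n \<Rightarrow> real) set))}"
    by (auto simp: S_def mat_of_def PiE_iff abs_less_iff minus_less_iff
        intro!: dense_ucc_mlp_conv_res_complete_graph[OF cont not_affine])
  moreover have "S \<in> sets (gauss_matrix_measure \<sigma>)"
    unfolding S_def by (rule gauss_matrix_measure_box(1)[OF sig(1)])
  moreover have "measure (gauss_matrix_measure \<sigma>) S \<ge> 1 - exp (- real CARD('d) / 2)"
    unfolding S_def by (rule gauss_matrix_measure_small_entries[OF sig])
  ultimately show ?thesis
    by blast
qed

end
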